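(* Let $M$ be a finitary matroid and $N$ a cofinitary matroid on the same ground set $E$. If $\mathsf{cond}^+(M,N)$ holds, then $N$ has a base that is independent in $M$.
   Context: Matroids are possibly infinite. $M.X:=M/(E\setminus X)$, where $M/X:=(M^*\upharpoonright(E\setminus X))^*$. Finitary: all circuits finite; cofinitary: dual finitary. A loop is an element $e$ with $\{e\}$ dependent; $r(K)=0$ means the empty set is a base of $K$. $W\subseteq E$ is an $(M,N)$-wave if $M\upharpoonright W$ has a base independent in $N.W$; the union of all waves is a wave, denoted $W(M,N)$. $\mathsf{cond}^+(M,N)$: $W(M,N)$ consists of $M$-loops and $r(N.W(M,N))=0$. *)

theory Defs
  imports Main
begin

text \<open>Possibly infinite matroids, given by ground set and independence predicate,
  with the independence axioms (I1)-(I3) and (IM) of Bruhn, Diestel, Kriesell,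
  Pendavingh and Wollan.\<close>

record 'a matroid =
  carrier :: "'a set"
  indep :: "'a set \<Rightarrow> bool"

definition basis :: "'a matroid \<Rightarrow> 'a set \<Rightarrow> 'a set \<Rightarrow> bool" where
  "basis M X B \<longleftrightarrow> indep M B \<and> B \<subseteq> X \<and>
     (\<forall>J. indep M J \<and> B \<subseteq> J \<and> J \<subseteq> X \<longrightarrow> J = B)"

definition base :: "'a matroid \<Rightarrow> 'a set \<Rightarrow> bool" where
  "base M B \<longleftrightarrow> basis M (carrier M) B"

definition is_matroid :: "'a matroid \<Rightarrow> bool" where
  "is_matroid M \<longleftrightarrow>
     (\<forall>I. indep M I \<longrightarrow> I \<subseteq> carrier M) \<and>
     indep M {} \<and>
     (\<forall>I J. indep M J \<and> I \<subseteq> J \<longrightarrow> indep M I) \<and>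
     (\<forall>I B. indep M I \<and> \<not> base M I \<and> base M B \<longrightarrow>
        (\<exists>x \<in> B - I. indep M (insert x I))) \<and>
     (\<forall>I X. indep M I \<and> I \<subseteq> X \<and> X \<subseteq> carrier M \<longrightarrow>
        (\<exists>J. I \<subseteq> J \<and> basis M X J))"

definition restrict :: "'a matroid \<Rightarrow> 'a set \<Rightarrow> 'a matroid" where
  "restrict M X = \<lparr>carrier = X, indep = (\<lambda>I. indep M I \<and> I \<subseteq> X)\<rparr>"

definition dual :: "'a matroid \<Rightarrow> 'a matroid" where
  "dual M = \<lparr>carrier = carrier M,
     indep = (\<lambda>I. \<exists>B. base M B \<and> I \<subseteq> carrier M - B)\<rparr>"

definition contract :: "'a matroid \<Rightarrow> 'a set \<Rightarrow> 'a matroid" where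
  "contract M X = dual (restrict (dual M) (carrier M - X))"

definition contract_to :: "'a matroid \<Rightarrow> 'a set \<Rightarrow> 'a matroid" where
  "contract_to M X = contract M (carrier M - X)"

definition circuit :: "'a matroid \<Rightarrow> 'a set \<Rightarrow> bool" where
  "circuit M C \<longleftrightarrow> C \<subseteq> carrier M \<and> \<not> indep M C \<and> (\<forall>D. D \<subset> C \<longrightarrow> indep M D)"

definition finitary :: "'a matroid \<Rightarrow> bool" where
  "finitary M \<longleftrightarrow> (\<forall>C. circuit M C \<longrightarrow> finite C)"

definition cofinitary :: "'a matroid \<Rightarrow> bool" where
  "cofinitary M \<longleftrightarrow> finitary (dual M)"

definition loop :: "'a matroid \<Rightarrow> 'a \<Rightarrow> bool" where
  "loop M e \<longleftrightarrow> e \<in> carrier M \<and> \<not> indep M {e}"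

definition wave :: "'a matroid \<Rightarrow> 'a matroid \<Rightarrow> 'a set \<Rightarrow> bool" where
  "wave M N W \<longleftrightarrow> W \<subseteq> carrier M \<and>
     (\<exists>B. base (restrict M W) B \<and> indep (contract_to N W) B)"

definition wave_union :: "'a matroid \<Rightarrow> 'a matroid \<Rightarrow> 'a set" where
  "wave_union M N = \<Union>{W. wave M N W}"

text \<open>\<open>cond+(M,N)\<close>: \<open>W(M,N)\<close> consists of \<open>M\<close>-loops and \<open>r(N.W(M,N)) = 0\<close>,
  i.e. the empty set is a base of \<open>N.W(M,N)\<close>.\<close>
definition cond_plus :: "'a matroid \<Rightarrow> 'a matroid \<Rightarrow> bool" where
  "cond_plus M N \<longleftrightarrow> (\<forall>e \<in> wave_union M N. loop M e) \<and>
     base (contract_to N (wave_union M N)) {}"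

end

(*
  By cond+, some base B0 of N is disjoint from every (M,N)-wave. On a finite set F, Edmonds'
  matroid intersection theorem for M | F and N contracted onto F yields either a common
  independent set that extends to a base of N whose trace on F is M-independent, or a minimizer
  X of the min-max formula; such an X is a wave, and B0 avoiding X contradicts the min-max value.
  A compactness argument (Zorn's lemma on consistent partial assignments) glues these finite
  traces into one set A all of whose finite subsets are M-independent and whose complement has
  all finite subsets N-coindependent; finitarity of M and cofinitarity of N make A independent
  and its complement coindependent, so some base of N lies inside A.
*)
theory Submission
  imports Defs
begin

lemma base_restrict_iff_basis: "base (restrict M X) A \<longleftrightarrow> basis M X A"
  unfolding base_def basis_def restrict_def by auto

locale matroid =
  fixes M :: "'a matroid"
  assumes is_matroid: "is_matroid M"
begin

lemma indep_subset_carrier: "indep M I \<Longrightarrow> I \<subseteq> carrier M"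
  using is_matroid[unfolded is_matroid_def, THEN conjunct1] by blast

lemma indep_empty: "indep M {}"
  using is_matroid[unfolded is_matroid_def] by (elim conjE)

lemma indep_subset: "indep M J \<Longrightarrow> I \<subseteq> J \<Longrightarrow> indep M I"
  using is_matroid[unfolded is_matroid_def, THEN conjunct2, THEN conjunct2, THEN conjunct1]
  by blast

lemma base_augment:
  "indep M I \<Longrightarrow> \<not> base M I \<Longrightarrow> base M B \<Longrightarrow> \<exists>x\<in>B - I. indep M (insert x I)"
  using is_matroid[unfolded is_matroid_def, THEN conjunct2, THEN conjunct2, THEN conjunct2,
      THEN conjunct1]
  by blast

lemma basis_extend:
  "indep M I \<Longrightarrow> I \<subseteq> X \<Longrightarrow> X \<subseteq> carrier M \<Longrightarrow> \<exists>J. I \<subseteq> J \<and> basis M X J"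
  using is_matroid[unfolded is_matroid_def, THEN conjunct2, THEN conjunct2, THEN conjunct2,
      THEN conjunct2]
  by blast

lemma basis_exists: "X \<subseteq> carrier M \<Longrightarrow> \<exists>J. basis M X J"
  using basis_extend[OF indep_empty] by blast

lemma basis_indep: "basis M X J \<Longrightarrow> indep M J"
  unfolding basis_def by blast

lemma basis_subset: "basis M X J \<Longrightarrow> J \<subseteq> X"
  unfolding basis_def by blast

lemma basis_maximal: "basis M X J \<Longrightarrow> z \<in> X \<Longrightarrow> z \<notin> J \<Longrightarrow> \<not> indep M (insert z J)"
  unfolding basis_def by blast

lemma basisI:
  assumes J: "indep M J" "J \<subseteq> X"
    and max: "\<And>z. z \<in> X \<Longrightarrow> z \<notin> J \<Longrightarrow> \<not> indep M (insert z J)"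
  shows "basis M X J"
  unfolding basis_def
proof (intro conjI allI impI)
  fix J' assume J': "indep M J' \<and> J \<subseteq> J' \<and> J' \<subseteq> X"
  show "J' = J"
  proof (rule ccontr)
    assume "J' \<noteq> J"
    then obtain z where "z \<in> J'" "z \<notin> J" using J' by blast
    moreover from this have "indep M (insert z J)" using J' indep_subset by blast
    ultimately show False using max J' by blast
  qed
qed (use J in auto)

lemma base_indep: "base M B \<Longrightarrow> indep M B"
  unfolding base_def by (rule basis_indep)

lemma base_maximal: "base M B \<Longrightarrow> z \<notin> B \<Longrightarrow> \<not> indep M (insert z B)"
  unfolding base_def basis_def using indep_subset_carrier by blast

lemma base_subset_carrier: "base M B \<Longrightarrow> B \<subseteq> carrier M"
  by (rule indep_subset_carrier[OF base_indep])

lemma indep_extend_to_base: "indep M I \<Longrightarrow> \<exists>B. base M B \<and> I \<subseteq> B"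
  using basis_extend[of I "carrier M"] indep_subset_carrier unfolding base_def by auto

lemma base_remove_not_base: "base M B \<Longrightarrow> x \<in> B \<Longrightarrow> \<not> base M (B - {x})"
  using base_maximal[of "B - {x}" x] base_indep[of B] by (metis insert_Diff Diff_iff singletonI)

lemma base_exchange:
  assumes B: "base M B" and x: "x \<in> B" and y: "y \<notin> B"
    and i: "indep M (insert y (B - {x}))"
  shows "base M (insert y (B - {x}))"
proof (rule ccontr)
  assume "\<not> base M (insert y (B - {x}))"
  then obtain z where "z \<in> B" "z \<notin> insert y (B - {x})"
    "indep M (insert z (insert y (B - {x})))"
    using base_augment[OF i _ B] by blast
  moreover from this have "insert z (insert y (B - {x})) = insert y B" using x by blast
  ultimately show False using base_maximal[OF B y] by simp
qed

lemma basis_absorbs_base: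
  assumes B: "basis M X B" and B': "base M B'" "B \<subseteq> B'"
  shows "B' \<inter> X \<subseteq> B"
proof
  fix z assume z: "z \<in> B' \<inter> X"
  show "z \<in> B"
  proof (rule ccontr)
    assume "z \<notin> B"
    moreover have "indep M (insert z B)"
      using indep_subset[OF base_indep[OF B'(1)]] B'(2) z by blast
    ultimately show False using basis_maximal[OF B] z by blast
  qed
qed

text \<open>Extend \<open>insert w I\<close> by \<open>J - X\<close> to a base \<open>J1\<close>; then \<open>B \<union> (J1 - X)\<close> is a base as well,
  and augmenting the non-base \<open>J1 - {w}\<close> from it can only add an element of \<open>B\<close>.\<close>
lemma basis_augment_via_base:
  assumes B: "basis M X B" and J: "base M J" "J \<inter> X = I" "indep M (B \<union> (J - X))"
    and w: "w \<in> X" "w \<notin> I" "indep M (insert w I)"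
  shows "\<exists>z\<in>B - I. indep M (insert z I)"
proof -
  have "insert w I \<union> (J - X) \<subseteq> carrier M"
    using base_subset_carrier[OF J(1)] indep_subset_carrier[OF w(3)] by blast
  then obtain J1 where J1: "insert w I \<subseteq> J1" "basis M (insert w I \<union> (J - X)) J1"
    using basis_extend[OF w(3) Un_upper1] by blast
  have J1_base: "base M J1"
  proof (rule ccontr)
    assume "\<not> base M J1"
    then obtain z where "z \<in> J" "z \<notin> J1" "indep M (insert z J1)"
      using base_augment[OF basis_indep[OF J1(2)] _ J(1)] by blast
    moreover from this have "z \<in> J - X" using J1(1) J(2) by blast
    ultimately show False using basis_maximal[OF J1(2)] by blast
  qed
  have J1_sub: "J1 \<subseteq> insert w I \<union> (J - X)" using basis_subset[OF J1(2)] .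
  define B2 where "B2 = B \<union> (J1 - X)"
  have "B2 \<subseteq> B \<union> (J - X)" unfolding B2_def using J1_sub w(1) J(2) by blast
  then have "indep M B2" by (rule indep_subset[OF J(3)])
  have B2_base: "base M B2"
  proof (rule ccontr)
    assume "\<not> base M B2"
    then obtain z where "z \<in> J1" "z \<notin> B2" "indep M (insert z B2)"
      using base_augment[OF \<open>indep M B2\<close> _ J1_base] by blast
    moreover from this have "indep M (insert z B)"
      using indep_subset[of "insert z B2" "insert z B"] unfolding B2_def by blast
    ultimately show False using basis_maximal[OF B] unfolding B2_def by blast
  qed
  define I0 where "I0 = I \<union> (J1 - X)"
  have "I0 = J1 - {w}" unfolding I0_def using J1(1) J1_sub w(1,2) by blast
  then have "indep M I0" "\<not> base M I0"
    using indep_subset[OF basis_indep[OF J1(2)]] base_remove_not_base[OF J1_base] J1(1) by auto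
  then obtain z where z: "z \<in> B2" "z \<notin> I0" "indep M (insert z I0)"
    using base_augment[OF _ _ B2_base] by blast
  moreover from this have "indep M (insert z I)"
    using indep_subset[of "insert z I0" "insert z I"] unfolding I0_def by blast
  ultimately show ?thesis unfolding B2_def I0_def by blast
qed

lemma basis_augment:
  assumes I: "indep M I" "I \<subseteq> X" and X: "X \<subseteq> carrier M"
    and w: "w \<in> X" "w \<notin> I" "indep M (insert w I)" and B: "basis M X B"
  shows "\<exists>z\<in>B - I. indep M (insert z I)"
proof -
  obtain Bh where Bh: "base M Bh" "B \<subseteq> Bh"
    using indep_extend_to_base[OF basis_indep[OF B]] by blast
  have "I \<union> (Bh - X) \<subseteq> carrier M" using I(2) X base_subset_carrier[OF Bh(1)] by blast
  then obtain J where J: "I \<subseteq> J" "basis M (I \<union> (Bh - X)) J"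
    using basis_extend[OF I(1) Un_upper1] by blast
  show ?thesis
  proof (cases "base M J")
    case False
    then obtain z where z: "z \<in> Bh" "z \<notin> J" "indep M (insert z J)"
      using base_augment[OF basis_indep[OF J(2)] _ Bh(1)] by blast
    then have "z \<in> X" using basis_maximal[OF J(2)] by blast
    then have "z \<in> B - I" using z basis_absorbs_base[OF B Bh] J(1) by blast
    moreover have "indep M (insert z I)" using indep_subset[OF z(3)] J(1) by blast
    ultimately show ?thesis by blast
  next
    case True
    have J_sub: "J \<subseteq> I \<union> (Bh - X)" using basis_subset[OF J(2)] .
    then have JX: "J \<inter> X = I" using J(1) I(2) by blast
    have "B \<union> (J - X) \<subseteq> Bh" using J_sub Bh(2) I(2) by blast
    then have "indep M (B \<union> (J - X))" by (rule indep_subset[OF base_indep[OF Bh(1)]])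
    then show ?thesis by (rule basis_augment_via_base[OF B True JX _ w])
  qed
qed

lemma basis_exchange:
  assumes X: "X \<subseteq> carrier M" and I: "basis M X I" and J: "basis M X J"
    and y: "y \<in> I" "y \<notin> J"
  shows "\<exists>z\<in>J - I. basis M X (insert z (I - {y}))"
proof -
  have I_sub: "I \<subseteq> X" using basis_subset[OF I] .
  have "indep M (I - {y})" using indep_subset[OF basis_indep[OF I]] by blast
  moreover have "insert y (I - {y}) = I" using y(1) by blast
  ultimately obtain z where z: "z \<in> J" "z \<notin> I - {y}" "indep M (insert z (I - {y}))"
    using basis_augment[OF _ _ X _ _ _ J, of "I - {y}" y] I_sub basis_indep[OF I] by auto
  have zI: "z \<notin> I" using z(1,2) y(2) by blast
  define I' where "I' = insert z (I - {y})"
  have I'_sub: "I' \<subseteq> X" unfolding I'_def using I_sub basis_subset[OF J] z(1) by blast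
  have "basis M X I'"
  proof (rule basisI[OF z(3)[folded I'_def] I'_sub])
    fix u assume u: "u \<in> X" "u \<notin> I'"
    show "\<not> indep M (insert u I')"
    proof
      assume "indep M (insert u I')"
      then obtain v where v: "v \<in> I" "v \<notin> I'" "indep M (insert v I')"
        using basis_augment[OF z(3)[folded I'_def] I'_sub X u _ I] by blast
      then have "insert v I' = insert z I" unfolding I'_def by blast
      then have "indep M (insert z I)" using v(3) by simp
      then show False using basis_maximal[OF I _ zI] z(1) basis_subset[OF J] by blast
    qed
  qed
  then show ?thesis unfolding I'_def using z(1) zI by blast
qed

lemma basis_card_diff_le:
  assumes X: "X \<subseteq> carrier M" and I: "basis M X I" and J: "basis M X J"
    and fin: "finite (I - J)"
  shows "finite (J - I) \<and> card (J - I) \<le> card (I - J)"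
  using I fin
proof (induction "card (I - J)" arbitrary: I)
  case 0
  then have "I \<subseteq> J" by auto
  then have "I = J" using 0 J unfolding basis_def by blast
  then show ?case by simp
next
  case (Suc n)
  then obtain y where y: "y \<in> I" "y \<notin> J" by (metis Diff_iff card.empty ex_in_conv nat.simps(3))
  then obtain z where z: "z \<in> J - I" and I': "basis M X (insert z (I - {y}))"
    using basis_exchange[OF X Suc.prems(1) J] by blast
  have diff1: "insert z (I - {y}) - J = (I - J) - {y}" using z by blast
  have diff2: "J - insert z (I - {y}) = (J - I) - {z}" using y by blast
  have "n = card (insert z (I - {y}) - J)" "finite (insert z (I - {y}) - J)"
    using Suc.hyps(2) Suc.prems(2) y unfolding diff1 by simp_all
  then have IH: "finite (J - I - {z}) \<and> card (J - I - {z}) \<le> n"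
    using Suc.hyps(1)[OF _ I'] unfolding diff2 by blast
  then have "finite (J - I)" by simp
  moreover from this have "card (J - I) = Suc (card (J - I - {z}))"
    using z by (rule card.remove)
  ultimately show ?case using IH Suc.hyps(2) by simp
qed

lemma indep_augment_card:
  assumes I: "indep M I" and J: "indep M J"
    and fin: "finite (I - J)" "finite (J - I)" and lt: "card (I - J) < card (J - I)"
  shows "\<exists>z\<in>J - I. indep M (insert z I)"
proof (rule ccontr)
  assume no_aug: "\<not> ?thesis"
  define X where "X = I \<union> J"
  have X: "X \<subseteq> carrier M"
    unfolding X_def using indep_subset_carrier[OF I] indep_subset_carrier[OF J] by blast
  have I_basis: "basis M X I" by (rule basisI[OF I]) (use no_aug in \<open>auto simp: X_def\<close>)
  obtain J' where J': "J \<subseteq> J'" "basis M X J'"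
    using basis_extend[OF J _ X] unfolding X_def by blast
  have "I - J' \<subseteq> I - J" using J'(1) by blast
  then have "finite (I - J')" "card (I - J') \<le> card (I - J)"
    using fin(1) by (auto intro: finite_subset card_mono)
  moreover from this have "finite (J' - I) \<and> card (J' - I) \<le> card (I - J')"
    using basis_card_diff_le[OF X I_basis J'(2)] by blast
  moreover have "card (J - I) \<le> card (J' - I)" using calculation J'(1) by (intro card_mono) auto
  ultimately show False using lt by linarith
qed

lemma fundamental_circuit:
  assumes B: "base M B" and x: "x \<in> carrier M" "x \<notin> B"
  defines "C \<equiv> insert x {y \<in> B. indep M (insert x (B - {y}))}"
  shows "circuit M C"
  unfolding circuit_def
proof (intro conjI allI impI)
  show "C \<subseteq> carrier M" unfolding C_def using x base_subset_carrier[OF B] by blast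
  show "\<not> indep M C"
  proof
    assume "indep M C"
    moreover have "insert x B \<subseteq> carrier M" using x base_subset_carrier[OF B] by blast
    ultimately obtain J where J: "C \<subseteq> J" "basis M (insert x B) J"
      using basis_extend[of C "insert x B"] unfolding C_def by blast
    have J_base: "base M J"
    proof (rule ccontr)
      assume "\<not> base M J"
      then obtain z where "z \<in> B" "z \<notin> J" "indep M (insert z J)"
        using base_augment[OF basis_indep[OF J(2)] _ B] by blast
      then show False using basis_maximal[OF J(2)] by blast
    qed
    have "J \<noteq> insert x B" using base_maximal[OF B x(2)] basis_indep[OF J(2)] by blast
    then obtain y where y: "y \<in> B" "y \<notin> J"
      using basis_subset[OF J(2)] J(1) unfolding C_def by blast
    then obtain z where z: "z \<in> J" "z \<notin> B - {y}" "indep M (insert z (B - {y}))"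
      using base_augment[OF indep_subset[OF base_indep[OF B]] base_remove_not_base[OF B] J_base]
      by blast
    then have "z = x" using y basis_subset[OF J(2)] by blast
    then have "y \<in> C" using z(3) y(1) unfolding C_def by blast
    then show False using y(2) J(1) by blast
  qed
  fix D assume D: "D \<subset> C"
  show "indep M D"
  proof (cases "x \<in> D")
    case False
    then have "D \<subseteq> B" using D unfolding C_def by blast
    then show ?thesis by (rule indep_subset[OF base_indep[OF B]])
  next
    case True
    then obtain y where y: "y \<in> B" "y \<notin> D" "indep M (insert x (B - {y}))"
      using D unfolding C_def by blast
    moreover have "D \<subseteq> insert x (B - {y})" using D y(2) unfolding C_def by blast
    ultimately show ?thesis using indep_subset by blast
  qed
qed

lemma finitary_indepI:
  assumes fin: "finitary M" and I: "I \<subseteq> carrier M"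
    and finite_indep: "\<And>F. finite F \<Longrightarrow> F \<subseteq> I \<Longrightarrow> indep M F"
  shows "indep M I"
proof (rule ccontr)
  assume "\<not> indep M I"
  obtain K where K: "basis M I K" using basis_exists[OF I] by blast
  then obtain x where x: "x \<in> I" "x \<notin> K"
    using basis_indep[OF K] basis_subset[OF K] \<open>\<not> indep M I\<close> by (metis subsetI subset_antisym)
  have K_x: "\<not> indep M (insert x K)" using basis_maximal[OF K x] .
  obtain B where B: "base M B" "K \<subseteq> B" using indep_extend_to_base[OF basis_indep[OF K]] by blast
  have "x \<notin> B" using K_x indep_subset[OF base_indep[OF B(1)]] B(2) by blast
  define C where "C = insert x {y \<in> B. indep M (insert x (B - {y}))}"
  have circ: "circuit M C"
    unfolding C_def by (rule fundamental_circuit[OF B(1)]) (use x I \<open>x \<notin> B\<close> in auto)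
  have "C \<subseteq> I"
  proof
    fix y assume "y \<in> C"
    show "y \<in> I"
    proof (rule ccontr)
      assume "y \<notin> I"
      then have "y \<noteq> x" "indep M (insert x (B - {y}))" using x \<open>y \<in> C\<close> unfolding C_def by auto
      moreover have "insert x K \<subseteq> insert x (B - {y})" using B(2) basis_subset[OF K] \<open>y \<notin> I\<close> by blast
      ultimately show False using K_x indep_subset by blast
    qed
  qed
  moreover have "finite C" using fin circ unfolding finitary_def by blast
  ultimately show False using finite_indep circ unfolding circuit_def by blast
qed

lemma indep_dual_iff: "indep (dual M) I \<longleftrightarrow> (\<exists>B. base M B \<and> I \<subseteq> carrier M - B)"
  unfolding dual_def by simp

lemma fundamental_cocircuit:
  assumes B: "base M B" and x: "x \<in> B"
  defines "C \<equiv> insert x {y \<in> carrier M - B. indep M (insert y (B - {x}))}"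
  shows "circuit (dual M) C"
  unfolding circuit_def
proof (intro conjI allI impI)
  show "C \<subseteq> carrier (dual M)"
    unfolding C_def dual_def using x base_subset_carrier[OF B] by auto
  show "\<not> indep (dual M) C"
  proof
    assume "indep (dual M) C"
    then obtain B' where B': "base M B'" "C \<subseteq> carrier M - B'" unfolding indep_dual_iff by blast
    then obtain z where z: "z \<in> B'" "z \<notin> B - {x}" "indep M (insert z (B - {x}))"
      using base_augment[OF indep_subset[OF base_indep[OF B]] base_remove_not_base[OF B x]]
      by blast
    moreover have "z \<noteq> x" using z(1) B'(2) unfolding C_def by blast
    ultimately have "z \<in> C" using base_subset_carrier[OF B'(1)] unfolding C_def by blast
    then show False using z(1) B'(2) by blast
  qed
  fix D assume D: "D \<subset> C"
  show "indep (dual M) D"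
  proof (cases "x \<in> D")
    case False
    then have "D \<subseteq> carrier M - B" using D unfolding C_def by blast
    then show ?thesis unfolding indep_dual_iff using B by blast
  next
    case True
    then obtain y where y: "y \<in> carrier M - B" "y \<notin> D" "indep M (insert y (B - {x}))"
      using D unfolding C_def by blast
    then have "base M (insert y (B - {x}))" using base_exchange[OF B x] by blast
    moreover have "D \<subseteq> carrier M - insert y (B - {x})"
      using D y(1,2) x base_subset_carrier[OF B] unfolding C_def by blast
    ultimately show ?thesis unfolding indep_dual_iff by blast
  qed
qed

lemma cofinitary_coindepI:
  assumes cofin: "cofinitary M" and D: "D \<subseteq> carrier M"
    and finite_coindep: "\<And>F. finite F \<Longrightarrow> F \<subseteq> D \<Longrightarrow> \<exists>B. base M B \<and> F \<inter> B = {}"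
  shows "\<exists>B. base M B \<and> D \<inter> B = {}"
proof (rule ccontr)
  assume no_base: "\<not> ?thesis"
  obtain K where K: "basis M (carrier M - D) K" using basis_exists[of "carrier M - D"] by blast
  obtain B where B: "base M B" "K \<subseteq> B" using indep_extend_to_base[OF basis_indep[OF K]] by blast
  have "\<not> base M K" using no_base basis_subset[OF K] by blast
  then obtain x where x: "x \<in> B" "x \<notin> K" using B basis_indep[OF K] by (metis subsetI subset_antisym)
  have K_max: "y \<in> D" if "y \<in> carrier M" "y \<notin> K" "indep M (insert y K)" for y
    using basis_maximal[OF K] that by blast
  define C where "C = insert x {y \<in> carrier M - B. indep M (insert y (B - {x}))}"
  have circ: "circuit (dual M) C" unfolding C_def using fundamental_cocircuit[OF B(1) x(1)] .
  have "C \<subseteq> D"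
  proof
    fix y assume y: "y \<in> C"
    show "y \<in> D"
    proof (cases "y = x")
      case True
      have "insert x K \<subseteq> B" using B(2) x(1) by blast
      then show ?thesis
        using K_max[of x] True x(2) base_subset_carrier[OF B(1)]
          indep_subset[OF base_indep[OF B(1)]]
        by blast
    next
      case False
      then have "y \<in> carrier M - B" "indep M (insert y (B - {x}))" using y unfolding C_def by auto
      moreover have "insert y K \<subseteq> insert y (B - {x})" using B(2) x(2) by blast
      ultimately show ?thesis using K_max[of y] B(2) indep_subset by blast
    qed
  qed
  moreover have "finite C" using cofin circ unfolding cofinitary_def finitary_def by blast
  ultimately obtain B' where "base M B'" "C \<inter> B' = {}" using finite_coindep by blast
  then have "indep (dual M) C" unfolding indep_dual_iff using \<open>C \<subseteq> D\<close> D by blast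
  then show False using circ unfolding circuit_def by blast
qed

end

section \<open>Edmonds' intersection theorem for rank functions\<close>

definition rank_function :: "'a set \<Rightarrow> ('a set \<Rightarrow> nat) \<Rightarrow> bool" where
  "rank_function F r \<longleftrightarrow> r {} = 0 \<and>
     (\<forall>X e. X \<subseteq> F \<longrightarrow> e \<in> F \<longrightarrow> r X \<le> r (insert e X) \<and> r (insert e X) \<le> Suc (r X)) \<and>
     (\<forall>X Y. X \<subseteq> F \<longrightarrow> Y \<subseteq> F \<longrightarrow> r (X \<inter> Y) + r (X \<union> Y) \<le> r X + r Y)"

lemma rank_function_empty: "rank_function F r \<Longrightarrow> r {} = 0"
  unfolding rank_function_def by (elim conjE)

lemma rank_function_insert:
  "rank_function F r \<Longrightarrow> X \<subseteq> F \<Longrightarrow> e \<in> F \<Longrightarrow> r X \<le> r (insert e X) \<and> r (insert e X) \<le> Suc (r X)"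
  unfolding rank_function_def by (elim conjE) blast

lemma rank_function_submodular:
  "rank_function F r \<Longrightarrow> X \<subseteq> F \<Longrightarrow> Y \<subseteq> F \<Longrightarrow> r (X \<inter> Y) + r (X \<union> Y) \<le> r X + r Y"
  unfolding rank_function_def by (elim conjE) blast

lemma rank_function_subset: "rank_function F r \<Longrightarrow> G \<subseteq> F \<Longrightarrow> rank_function G r"
  unfolding rank_function_def by (elim conjE) (intro conjI allI impI; meson subset_trans subsetD)

lemma rank_function_singleton_le: "rank_function F r \<Longrightarrow> e \<in> F \<Longrightarrow> r {e} \<le> 1"
  using rank_function_insert[of F r "{}" e] rank_function_empty[of F r] by simp

lemma rank_function_mono:
  assumes r: "rank_function F r" and fin: "finite F" and XY: "X \<subseteq> Y" "Y \<subseteq> F"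
  shows "r X \<le> r Y"
proof -
  have "r X \<le> r (X \<union> D)" if "finite D" "D \<subseteq> F" for D
    using that
  proof (induction D rule: finite_induct)
    case (insert e D)
    then have "r (X \<union> D) \<le> r (insert e (X \<union> D))"
      using rank_function_insert[OF r, of "X \<union> D" e] XY by blast
    with insert show ?case by simp
  qed simp
  moreover have "finite (Y - X)" "Y - X \<subseteq> F" using XY fin by (auto intro: finite_subset)
  ultimately have "r X \<le> r (X \<union> (Y - X))" by blast
  moreover have "X \<union> (Y - X) = Y" using XY by blast
  ultimately show ?thesis by simp
qed

lemma rank_function_subadditive:
  "rank_function F r \<Longrightarrow> X \<subseteq> F \<Longrightarrow> Y \<subseteq> F \<Longrightarrow> X \<inter> Y = {} \<Longrightarrow> r (X \<union> Y) \<le> r X + r Y"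
  using rank_function_submodular[of F r X Y] rank_function_empty[of F r] by simp

lemma rank_function_contract:
  assumes r: "rank_function F r" and fin: "finite F" and e: "e \<in> F"
  shows "rank_function (F - {e}) (\<lambda>X. r (insert e X) - r {e})"
  unfolding rank_function_def
proof (intro conjI allI impI)
  have ge: "r {e} \<le> r (insert e X)" if "X \<subseteq> F" for X
    using rank_function_mono[OF r fin, of "{e}" "insert e X"] that e by blast
  show "r (insert e {}) - r {e} = 0" by simp
  fix X x assume X: "X \<subseteq> F - {e}" "x \<in> F - {e}"
  then have "r (insert e X) \<le> r (insert e (insert x X))"
    "r (insert e (insert x X)) \<le> Suc (r (insert e X))"
    using rank_function_insert[OF r, of "insert e X" x] e by (auto simp: insert_commute)
  moreover have "r {e} \<le> r (insert e X)" using ge X by blast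
  ultimately show "r (insert e X) - r {e} \<le> r (insert e (insert x X)) - r {e}"
    "r (insert e (insert x X)) - r {e} \<le> Suc (r (insert e X) - r {e})"
    by arith+
next
  fix X Y assume X: "X \<subseteq> F - {e}" and Y: "Y \<subseteq> F - {e}"
  have "insert e X \<subseteq> F" "insert e Y \<subseteq> F" using X Y e by auto
  from rank_function_submodular[OF r this]
  have submod: "r (insert e (X \<inter> Y)) + r (insert e (X \<union> Y)) \<le> r (insert e X) + r (insert e Y)"
    by simp
  have ge: "r {e} \<le> r (insert e Z)" if "Z \<subseteq> F" for Z
    using rank_function_mono[OF r fin, of "{e}" "insert e Z"] that e by blast
  have "X \<inter> Y \<subseteq> F" "X \<union> Y \<subseteq> F" "X \<subseteq> F" "Y \<subseteq> F" using X Y by blast+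
  note ge[OF this(1)] ge[OF this(2)] ge[OF this(3)] ge[OF this(4)]
  with submod show "r (insert e (X \<inter> Y)) - r {e} + (r (insert e (X \<union> Y)) - r {e})
      \<le> r (insert e X) - r {e} + (r (insert e Y) - r {e})"
    by linarith
qed

text \<open>By weak duality such \<open>I\<close> and \<open>X\<close> are optimal on both sides of Edmonds' min-max formula.\<close>
definition minmax_certificate ::
  "'a set \<Rightarrow> ('a set \<Rightarrow> nat) \<Rightarrow> ('a set \<Rightarrow> nat) \<Rightarrow> 'a set \<Rightarrow> 'a set \<Rightarrow> bool" where
  "minmax_certificate F r1 r2 I X \<longleftrightarrow> I \<subseteq> F \<and> X \<subseteq> F \<and> r1 I = card I \<and> r2 I = card I \<and>
     r1 X + r2 (F - X) \<le> card I"

lemma minmax_certificate_insert_r1_loop: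
  assumes r1: "rank_function (insert e F) r1" and e: "e \<notin> F" "r1 {e} = 0"
    and cert: "minmax_certificate F r1 r2 I X"
  shows "minmax_certificate (insert e F) r1 r2 I (insert e X)"
proof -
  have "r1 (X \<union> {e}) \<le> r1 X"
    using rank_function_subadditive[OF r1, of X "{e}"] cert e unfolding minmax_certificate_def
    by auto
  moreover have "insert e F - insert e X = F - X" using e(1) by blast
  ultimately show ?thesis using cert unfolding minmax_certificate_def by auto
qed

lemma minmax_certificate_insert_r2_loop:
  assumes r2: "rank_function (insert e F) r2" and e: "e \<notin> F" "r2 {e} = 0"
    and cert: "minmax_certificate F r1 r2 I X"
  shows "minmax_certificate (insert e F) r1 r2 I X"
proof -
  have "r2 ((F - X) \<union> {e}) \<le> r2 (F - X)"
    using rank_function_subadditive[OF r2, of "F - X" "{e}"] e by auto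
  moreover have "insert e F - X = (F - X) \<union> {e}" using cert e(1) unfolding minmax_certificate_def
    by blast
  ultimately show ?thesis using cert unfolding minmax_certificate_def by auto
qed

lemma minmax_certificate_contract_lift:
  assumes r1: "rank_function (insert e F) r1" and r2: "rank_function (insert e F) r2"
    and fin: "finite F" and e: "e \<notin> F" "r1 {e} = 1" "r2 {e} = 1"
    and cert: "minmax_certificate F (\<lambda>Z. r1 (insert e Z) - r1 {e})
      (\<lambda>Z. r2 (insert e Z) - r2 {e}) I X"
  shows "r1 (insert e I) = card (insert e I)" "r2 (insert e I) = card (insert e I)"
    and "r1 (insert e X) + r2 (insert e (F - X)) \<le> card I + 2"
proof -
  have sub: "I \<subseteq> F" "X \<subseteq> F" "e \<notin> I" using cert e(1) unfolding minmax_certificate_def by blast+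
  have ge: "r {e} \<le> r (insert e Z)" if "rank_function (insert e F) r" "Z \<subseteq> F" for r Z
    using rank_function_mono[OF that(1), of "{e}" "insert e Z"] that(2) fin by blast
  have "finite I" using sub(1) fin by (rule finite_subset)
  then have "r1 (insert e I) = card (insert e I) \<and> r2 (insert e I) = card (insert e I)"
    using cert ge[OF r1 sub(1)] ge[OF r2 sub(1)] e sub(3) unfolding minmax_certificate_def
    by (simp; arith)
  then show "r1 (insert e I) = card (insert e I)" "r2 (insert e I) = card (insert e I)"
    by blast+
  show "r1 (insert e X) + r2 (insert e (F - X)) \<le> card I + 2"
    using cert ge[OF r1 sub(2)] ge[OF r2, of "F - X"] e unfolding minmax_certificate_def by auto
qed

text \<open>Uncrossing \<open>X\<close> with \<open>insert e X'\<close> by submodularity yields a set whose value is at most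
  the larger of \<open>card I\<close> and \<open>card (insert e I')\<close>.\<close>
lemma minmax_certificate_insert_contract:
  assumes r1: "rank_function (insert e F) r1" and r2: "rank_function (insert e F) r2"
    and fin: "finite F" and e: "e \<notin> F" "r1 {e} = 1" "r2 {e} = 1"
    and cert: "minmax_certificate F r1 r2 I X"
    and cert': "minmax_certificate F (\<lambda>Z. r1 (insert e Z) - r1 {e})
      (\<lambda>Z. r2 (insert e Z) - r2 {e}) I' X'"
  shows "\<exists>J Y. minmax_certificate (insert e F) r1 r2 J Y"
proof -
  let ?G = "insert e F"
  have sub: "I \<subseteq> F" "X \<subseteq> F" "I' \<subseteq> F" "X' \<subseteq> F" "e \<notin> I'" "e \<notin> X"
    using cert cert' e(1) unfolding minmax_certificate_def by blast+
  have "finite I'" using sub(3) fin by (rule finite_subset)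
  note lift = minmax_certificate_contract_lift[OF r1 r2 fin e cert']
  define P where "P = X \<inter> X'"
  define Q where "Q = insert e (X \<union> X')"
  have "r1 P + r1 Q \<le> r1 X + r1 (insert e X')"
    using rank_function_submodular[OF r1, of X "insert e X'"] sub(2,4,6)
    unfolding P_def Q_def by (auto simp: Int_insert_right)
  moreover have "r2 (?G - Q) + r2 (?G - P) \<le> r2 (F - X) + r2 (insert e (F - X'))"
  proof -
    have "(F - X) \<inter> insert e (F - X') = ?G - Q" "(F - X) \<union> insert e (F - X') = ?G - P"
      unfolding P_def Q_def using e(1) sub(6) by blast+
    then show ?thesis using rank_function_submodular[OF r2, of "F - X" "insert e (F - X')"] by auto
  qed
  ultimately have sum: "(r1 P + r2 (?G - P)) + (r1 Q + r2 (?G - Q)) \<le> card I + card I' + 2"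
    using cert lift(3) unfolding minmax_certificate_def by linarith
  have PQ: "P \<subseteq> ?G" "Q \<subseteq> ?G" unfolding P_def Q_def using sub by blast+
  show ?thesis
  proof (cases "card I' < card I")
    case True
    then have "r1 P + r2 (?G - P) \<le> card I \<or> r1 Q + r2 (?G - Q) \<le> card I" using sum by linarith
    then have "minmax_certificate ?G r1 r2 I P \<or> minmax_certificate ?G r1 r2 I Q"
      using cert PQ unfolding minmax_certificate_def by auto
    then show ?thesis by blast
  next
    case False
    have "card (insert e I') = Suc (card I')" using \<open>finite I'\<close> sub(5) by simp
    then have "r1 P + r2 (?G - P) \<le> card (insert e I') \<or> r1 Q + r2 (?G - Q) \<le> card (insert e I')"
      using sum False by linarith
    then have "minmax_certificate ?G r1 r2 (insert e I') P \<or>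
        minmax_certificate ?G r1 r2 (insert e I') Q"
      using lift(1,2) PQ sub(3) unfolding minmax_certificate_def by auto
    then show ?thesis by blast
  qed
qed

theorem rank_function_minmax:
  assumes "finite F" "rank_function F r1" "rank_function F r2"
  shows "\<exists>I X. minmax_certificate F r1 r2 I X"
  using assms
proof (induction F arbitrary: r1 r2 rule: finite_induct)
  case empty
  then show ?case unfolding minmax_certificate_def by (auto dest: rank_function_empty)
next
  case (insert e F)
  have "F \<subseteq> insert e F" by blast
  then obtain I X where cert: "minmax_certificate F r1 r2 I X"
    using insert.IH rank_function_subset insert.prems by blast
  consider "r1 {e} = 0" | "r2 {e} = 0" | "r1 {e} = 1" "r2 {e} = 1"
    using rank_function_singleton_le[OF insert.prems(1)]
      rank_function_singleton_le[OF insert.prems(2)]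
    by force
  then show ?case
  proof cases
    case 1
    then show ?thesis
      using minmax_certificate_insert_r1_loop[OF insert.prems(1) insert.hyps(2) _ cert]
      by blast
  next
    case 2
    then show ?thesis
      using minmax_certificate_insert_r2_loop[OF insert.prems(2) insert.hyps(2) _ cert]
      by blast
  next
    case 3
    have "insert e F - {e} = F" using insert.hyps(2) by blast
    then obtain I' X' where "minmax_certificate F (\<lambda>Z. r1 (insert e Z) - r1 {e})
        (\<lambda>Z. r2 (insert e Z) - r2 {e}) I' X'"
      using insert.IH rank_function_contract[OF insert.prems(1) _ insertI1]
        rank_function_contract[OF insert.prems(2) _ insertI1] insert.hyps(1) by fastforce
    then show ?thesis
      using minmax_certificate_insert_contract[OF insert.prems insert.hyps(1,2) 3 cert]
      by blast
  qed
qed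

section \<open>Relative rank and contraction\<close>

text \<open>The rank of \<open>Z\<close> in \<open>N\<close> contracted by the independent set \<open>K\<close>; meaningful only for
  finite \<open>Z\<close>.\<close>
definition rel_rank :: "'a matroid \<Rightarrow> 'a set \<Rightarrow> 'a set \<Rightarrow> nat" where
  "rel_rank N K Z = Max (card ` {Y. Y \<subseteq> Z \<and> indep N (Y \<union> K)})"

definition rel_basis :: "'a matroid \<Rightarrow> 'a set \<Rightarrow> 'a set \<Rightarrow> 'a set \<Rightarrow> bool" where
  "rel_basis N K Z Y \<longleftrightarrow> Y \<subseteq> Z \<and> indep N (Y \<union> K) \<and> (\<forall>z\<in>Z - Y. \<not> indep N (insert z (Y \<union> K)))"

context matroid
begin

context
  fixes K :: "'a set"
  assumes K: "indep M K"
begin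

lemma rel_rank_ge: "finite Z \<Longrightarrow> Y \<subseteq> Z \<Longrightarrow> indep M (Y \<union> K) \<Longrightarrow> card Y \<le> rel_rank M K Z"
  unfolding rel_rank_def by (rule Max_ge) auto

lemma rel_rank_attained: "finite Z \<Longrightarrow> \<exists>Y. Y \<subseteq> Z \<and> indep M (Y \<union> K) \<and> card Y = rel_rank M K Z"
proof -
  assume "finite Z"
  moreover have "{} \<in> {Y. Y \<subseteq> Z \<and> indep M (Y \<union> K)}" using K by simp
  ultimately have "rel_rank M K Z \<in> card ` {Y. Y \<subseteq> Z \<and> indep M (Y \<union> K)}"
    unfolding rel_rank_def by (intro Max_in) auto
  then show ?thesis by auto
qed

lemma rel_rank_empty: "rel_rank M K {} = 0"
  using rel_rank_attained[of "{}"] by auto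

lemma rel_basis_card:
  assumes Z: "finite Z" "Z \<inter> K = {}" and Y: "rel_basis M K Z Y"
  shows "card Y = rel_rank M K Z"
proof (rule ccontr)
  assume ne: "card Y \<noteq> rel_rank M K Z"
  have Y_sub: "Y \<subseteq> Z" and Y_indep: "indep M (Y \<union> K)"
    using Y unfolding rel_basis_def by blast+
  obtain Y' where Y': "Y' \<subseteq> Z" "indep M (Y' \<union> K)" "card Y' = rel_rank M K Z"
    using rel_rank_attained[OF Z(1)] by blast
  have "card Y < card Y'" using rel_rank_ge[OF Z(1) Y_sub Y_indep] ne Y'(3) by linarith
  moreover have fin: "finite Y" "finite Y'" using Y_sub Y'(1) Z(1) by (meson finite_subset)+
  ultimately have "card (Y - Y') < card (Y' - Y)"
    using card_Int_Diff[of Y Y'] card_Int_Diff[of Y' Y] by (simp add: Int_commute)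
  moreover have "(Y \<union> K) - (Y' \<union> K) = Y - Y'" "(Y' \<union> K) - (Y \<union> K) = Y' - Y"
    using Y_sub Y'(1) Z(2) by blast+
  ultimately obtain z where "z \<in> Y' - Y" "indep M (insert z (Y \<union> K))"
    using indep_augment_card[OF Y_indep Y'(2)] fin by auto
  then show False using Y Y'(1) unfolding rel_basis_def by blast
qed

lemma rel_basis_extend:
  assumes Z: "finite Z" and Y: "Y \<subseteq> Z" "indep M (Y \<union> K)"
  shows "\<exists>Y'. Y \<subseteq> Y' \<and> rel_basis M K Z Y'"
proof -
  let ?P = "\<lambda>Y'. Y \<subseteq> Y' \<and> Y' \<subseteq> Z \<and> indep M (Y' \<union> K)"
  have "?P Y" using Y by blast
  moreover have "\<forall>Y'. ?P Y' \<longrightarrow> card Y' < Suc (card Z)"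
    using card_mono[OF Z] by (simp add: le_imp_less_Suc)
  ultimately have "\<exists>Y'. ?P Y' \<and> (\<forall>Y''. ?P Y'' \<longrightarrow> card Y'' \<le> card Y')"
    by (rule ex_has_greatest_nat)
  then obtain Y' where Y': "?P Y'" and largest: "\<And>Y''. ?P Y'' \<Longrightarrow> card Y'' \<le> card Y'"
    by blast
  have "\<not> indep M (insert z (Y' \<union> K))" if z: "z \<in> Z - Y'" for z
  proof
    assume "indep M (insert z (Y' \<union> K))"
    then have "?P (insert z Y')" using Y' z by auto
    moreover have "finite Y'" using Y' Z by (meson finite_subset)
    ultimately show False using largest[of "insert z Y'"] z by simp
  qed
  then show ?thesis using Y' unfolding rel_basis_def by blast
qed

lemma rel_basis_exists: "finite Z \<Longrightarrow> \<exists>Y. rel_basis M K Z Y"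
  using rel_basis_extend[of Z "{}"] K by auto

lemma rel_basis_if_rel_rank_le_card:
  assumes Z: "finite Z" and Y: "Y \<subseteq> Z" "indep M (Y \<union> K)" and le: "rel_rank M K Z \<le> card Y"
  shows "rel_basis M K Z Y"
  unfolding rel_basis_def
proof (intro conjI ballI notI)
  fix z assume z: "z \<in> Z - Y" and "indep M (insert z (Y \<union> K))"
  then have "card (insert z Y) \<le> rel_rank M K Z" using rel_rank_ge[OF Z, of "insert z Y"] Y by simp
  moreover have "finite Y" using Y(1) Z by (rule finite_subset)
  ultimately show False using le z by simp
qed (use Y in auto)

lemma rel_rank_insert:
  assumes X: "finite X"
  shows "rel_rank M K X \<le> rel_rank M K (insert e X)"
    and "rel_rank M K (insert e X) \<le> Suc (rel_rank M K X)"
proof -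
  have fin: "finite (insert e X)" using X by simp
  obtain Y where "Y \<subseteq> X" "indep M (Y \<union> K)" "card Y = rel_rank M K X"
    using rel_rank_attained[OF X] by blast
  then show "rel_rank M K X \<le> rel_rank M K (insert e X)"
    using rel_rank_ge[OF fin, of Y] by auto
  obtain Y' where Y': "Y' \<subseteq> insert e X" "indep M (Y' \<union> K)" "card Y' = rel_rank M K (insert e X)"
    using rel_rank_attained[OF fin] by blast
  have "indep M ((Y' - {e}) \<union> K)" by (rule indep_subset[OF Y'(2)]) blast
  then have "card (Y' - {e}) \<le> rel_rank M K X" using rel_rank_ge[OF X] Y'(1) by blast
  moreover have "card Y' \<le> Suc (card (Y' - {e}))"
    using card_Diff1_le[of Y' e] finite_subset[OF Y'(1) fin] by (cases "e \<in> Y'") auto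
  ultimately show "rel_rank M K (insert e X) \<le> Suc (rel_rank M K X)" using Y'(3) by simp
qed

text \<open>Extend a relative basis \<open>Y0\<close> of \<open>X \<inter> Y\<close> to one of \<open>X \<union> Y\<close>; its traces on \<open>X\<close> and
  \<open>Y\<close> meet exactly in \<open>Y0\<close>.\<close>
lemma rel_rank_submodular:
  assumes fin: "finite X" "finite Y" and disj: "(X \<union> Y) \<inter> K = {}"
  shows "rel_rank M K (X \<inter> Y) + rel_rank M K (X \<union> Y) \<le> rel_rank M K X + rel_rank M K Y"
proof -
  have fin': "finite (X \<inter> Y)" "finite (X \<union> Y)" using fin by simp_all
  obtain Y0 where Y0: "rel_basis M K (X \<inter> Y) Y0" using rel_basis_exists[OF fin'(1)] by blast
  then have Y0_sub: "Y0 \<subseteq> X \<inter> Y" "indep M (Y0 \<union> K)" unfolding rel_basis_def by blast+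
  obtain Y1 where Y1: "Y0 \<subseteq> Y1" "rel_basis M K (X \<union> Y) Y1"
    using rel_basis_extend[OF fin'(2) _ Y0_sub(2)] Y0_sub(1) by blast
  then have Y1_sub: "Y1 \<subseteq> X \<union> Y" "indep M (Y1 \<union> K)" unfolding rel_basis_def by blast+
  have "card Y0 = rel_rank M K (X \<inter> Y)" "card Y1 = rel_rank M K (X \<union> Y)"
    using rel_basis_card[OF fin'(1) _ Y0] rel_basis_card[OF fin'(2) _ Y1(2)] disj by blast+
  moreover have "indep M ((Y1 \<inter> X) \<union> K)" "indep M ((Y1 \<inter> Y) \<union> K)"
    by (rule indep_subset[OF Y1_sub(2)], blast)+
  then have "card (Y1 \<inter> X) \<le> rel_rank M K X" "card (Y1 \<inter> Y) \<le> rel_rank M K Y"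
    using rel_rank_ge[OF fin(1), of "Y1 \<inter> X"] rel_rank_ge[OF fin(2), of "Y1 \<inter> Y"] by blast+
  moreover have "(Y1 \<inter> X) \<inter> (Y1 \<inter> Y) = Y0"
  proof
    show "Y0 \<subseteq> (Y1 \<inter> X) \<inter> (Y1 \<inter> Y)" using Y1(1) Y0_sub(1) by blast
    show "(Y1 \<inter> X) \<inter> (Y1 \<inter> Y) \<subseteq> Y0"
    proof
      fix w assume w: "w \<in> (Y1 \<inter> X) \<inter> (Y1 \<inter> Y)"
      have "insert w (Y0 \<union> K) \<subseteq> Y1 \<union> K" using w Y1(1) by blast
      then show "w \<in> Y0" using Y0 w indep_subset[OF Y1_sub(2)] unfolding rel_basis_def by blast
    qed
  qed
  moreover have "(Y1 \<inter> X) \<union> (Y1 \<inter> Y) = Y1" using Y1_sub(1) by blast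
  moreover have "finite Y1" using Y1_sub(1) fin'(2) by (rule finite_subset)
  ultimately show ?thesis using card_Un_Int[of "Y1 \<inter> X" "Y1 \<inter> Y"] by simp
qed

lemma rank_function_rel_rank:
  assumes Z: "finite Z" "Z \<inter> K = {}"
  shows "rank_function Z (rel_rank M K)"
  unfolding rank_function_def
proof (intro conjI allI impI)
  show "rel_rank M K {} = 0" by (rule rel_rank_empty)
next
  fix X e assume "X \<subseteq> Z"
  then have "finite X" using Z(1) by (rule finite_subset)
  then show "rel_rank M K X \<le> rel_rank M K (insert e X)"
    "rel_rank M K (insert e X) \<le> Suc (rel_rank M K X)"
    by (rule rel_rank_insert)+
next
  fix X Y assume XY: "X \<subseteq> Z" "Y \<subseteq> Z"
  then have "finite X" "finite Y" "(X \<union> Y) \<inter> K = {}" using Z by (auto intro: finite_subset)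
  then show "rel_rank M K (X \<inter> Y) + rel_rank M K (X \<union> Y) \<le> rel_rank M K X + rel_rank M K Y"
    by (rule rel_rank_submodular)
qed

lemma indep_if_rel_rank_eq_card:
  assumes "finite Z" "rel_rank M K Z = card Z"
  shows "indep M (Z \<union> K)"
proof -
  obtain Y where "Y \<subseteq> Z" "indep M (Y \<union> K)" "card Y = rel_rank M K Z"
    using rel_rank_attained[OF assms(1)] by blast
  moreover from this have "Y = Z" using card_subset_eq[OF assms(1)] assms(2) by simp
  ultimately show ?thesis by simp
qed

end

lemma base_extending_complement_basis:
  assumes K: "basis M (carrier M - X) K" and B: "base M B"
    and J: "K \<subseteq> J" "basis M (K \<union> (B \<inter> X)) J"
  shows "base M J"
proof (rule ccontr)
  assume "\<not> base M J"
  then obtain z where z: "z \<in> B" "z \<notin> J" "indep M (insert z J)"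
    using base_augment[OF basis_indep[OF J(2)] _ B] by blast
  show False
  proof (cases "z \<in> X")
    case True
    then show False using basis_maximal[OF J(2)] z by blast
  next
    case False
    have "indep M (insert z K)" by (rule indep_subset[OF z(3)]) (use J(1) in blast)
    then show False using basis_maximal[OF K] False z base_subset_carrier[OF B] J(1) by blast
  qed
qed

lemma base_restrict_dual:
  assumes X: "X \<subseteq> carrier M" and B: "base M B" "K \<subseteq> B" and K: "basis M (carrier M - X) K"
  shows "base (restrict (dual M) X) (X - B)"
  unfolding base_restrict_iff_basis basis_def
proof (intro conjI allI impI)
  show "indep (dual M) (X - B)" unfolding indep_dual_iff using B(1) X by blast
  show "X - B \<subseteq> X" by blast
  fix T assume T: "indep (dual M) T \<and> X - B \<subseteq> T \<and> T \<subseteq> X"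
  then obtain B' where B': "base M B'" "T \<subseteq> carrier M - B'" unfolding indep_dual_iff by blast
  have K_sub: "K \<subseteq> carrier M - X" using basis_subset[OF K] .
  have "K \<union> (B' \<inter> X) \<subseteq> carrier M" using K_sub base_subset_carrier[OF B'(1)] by blast
  then obtain J where J: "K \<subseteq> J" "basis M (K \<union> (B' \<inter> X)) J"
    using basis_extend[OF basis_indep[OF K] Un_upper1] by blast
  have J_base: "base M J" using base_extending_complement_basis[OF K B'(1) J] .
  have "J \<subseteq> B" using basis_subset[OF J(2)] B(2) T B'(2) by blast
  then have "B \<subseteq> J" using base_maximal[OF J_base] indep_subset[OF base_indep[OF B(1)]] by blast
  then show "T = X - B" using T B'(2) basis_subset[OF J(2)] K_sub by blast
qed

lemma indep_contract_to:
  assumes X: "X \<subseteq> carrier M" and B: "base M B" "K \<subseteq> B" and K: "basis M (carrier M - X) K"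
    and A: "A \<subseteq> X" "A \<subseteq> B"
  shows "indep (contract_to M X) A"
proof -
  have "carrier M - (carrier M - X) = X" using X by blast
  then have "contract_to M X = dual (restrict (dual M) X)"
    unfolding contract_to_def contract_def by simp
  then show ?thesis
    using base_restrict_dual[OF X B K] A unfolding dual_def restrict_def by auto
qed

lemma disjoint_base_if_contract_to_base_empty:
  assumes "base (contract_to M X) {}"
  shows "\<exists>B. base M B \<and> X \<inter> B = {}"
proof -
  define R where "R = restrict (dual M) (carrier M - (carrier M - X))"
  have "contract_to M X = dual R" unfolding contract_to_def contract_def R_def ..
  then have "indep (dual R) {}"
    and empty_max: "\<And>J. indep (dual R) J \<Longrightarrow> J \<subseteq> carrier (dual R) \<Longrightarrow> J = {}"
    using assms unfolding base_def basis_def by auto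
  then obtain S where S: "base R S" unfolding dual_def by auto
  have "indep (dual R) (carrier R - S)" "carrier R - S \<subseteq> carrier (dual R)"
    unfolding dual_def using S by auto
  then have "carrier R - S = {}" by (rule empty_max)
  moreover have "indep (dual M) S" using S unfolding R_def restrict_def base_def basis_def by simp
  then obtain B where "base M B" "S \<subseteq> carrier M - B" unfolding indep_dual_iff by blast
  ultimately have "X \<inter> B = {}"
    using base_subset_carrier[OF \<open>base M B\<close>] unfolding R_def restrict_def by auto
  then show ?thesis using \<open>base M B\<close> by blast
qed

lemma basis_iff_rel_basis_empty: "basis M X Y \<longleftrightarrow> rel_basis M {} X Y"
proof
  assume "basis M X Y"
  then show "rel_basis M {} X Y"
    unfolding rel_basis_def using basis_indep basis_subset basis_maximal by simp
next
  assume "rel_basis M {} X Y"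
  then show "basis M X Y" unfolding rel_basis_def by (intro basisI) auto
qed

lemma basis_union_rel_basis:
  assumes K: "basis M (carrier M - F) K" and Z: "Z \<subseteq> F" and Y: "rel_basis M K Z Y"
  shows "basis M ((carrier M - F) \<union> Z) (Y \<union> K)"
proof (rule basisI)
  show "indep M (Y \<union> K)" "Y \<union> K \<subseteq> (carrier M - F) \<union> Z"
    using Y basis_subset[OF K] unfolding rel_basis_def by blast+
  fix z assume z: "z \<in> (carrier M - F) \<union> Z" "z \<notin> Y \<union> K"
  show "\<not> indep M (insert z (Y \<union> K))"
  proof (cases "z \<in> Z")
    case True
    then show ?thesis using Y z(2) unfolding rel_basis_def by blast
  next
    case False
    then have "\<not> indep M (insert z K)" using basis_maximal[OF K] z Z by blast
    then show ?thesis using indep_subset[of "insert z (Y \<union> K)" "insert z K"] by blast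
  qed
qed

lemma rel_rank_contract_additive:
  assumes K: "indep M K" and fin: "finite Z" "finite Z0"
    and disj: "Z \<inter> Z0 = {}" "(Z \<union> Z0) \<inter> K = {}" and Y0: "rel_basis M K Z0 Y0"
  shows "rel_rank M (Y0 \<union> K) Z + rel_rank M K Z0 = rel_rank M K (Z \<union> Z0)"
proof -
  have Y0_sub: "Y0 \<subseteq> Z0" "indep M (Y0 \<union> K)" using Y0 unfolding rel_basis_def by blast+
  obtain Y where Y: "rel_basis M (Y0 \<union> K) Z Y" using rel_basis_exists[OF Y0_sub(2) fin(1)] by blast
  then have Y_sub: "Y \<subseteq> Z" "indep M (Y \<union> (Y0 \<union> K))" unfolding rel_basis_def by blast+
  have "rel_basis M K (Z \<union> Z0) (Y \<union> Y0)"
    unfolding rel_basis_def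
  proof (intro conjI ballI)
    show "Y \<union> Y0 \<subseteq> Z \<union> Z0" "indep M (Y \<union> Y0 \<union> K)" using Y_sub Y0_sub by (auto simp: Un_assoc)
    fix z assume z: "z \<in> Z \<union> Z0 - (Y \<union> Y0)"
    show "\<not> indep M (insert z (Y \<union> Y0 \<union> K))"
    proof (cases "z \<in> Z")
      case True
      then show ?thesis using Y z unfolding rel_basis_def by (simp add: Un_assoc)
    next
      case False
      then have "\<not> indep M (insert z (Y0 \<union> K))" using Y0 z unfolding rel_basis_def by blast
      then show ?thesis using indep_subset[of "insert z (Y \<union> Y0 \<union> K)" "insert z (Y0 \<union> K)"] by blast
    qed
  qed
  then have "card (Y \<union> Y0) = rel_rank M K (Z \<union> Z0)"
    using rel_basis_card[OF K _ disj(2)] fin by blast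
  moreover have "card Y = rel_rank M (Y0 \<union> K) Z"
    using rel_basis_card[OF Y0_sub(2) fin(1) _ Y] disj Y0_sub(1) by blast
  moreover have "card Y0 = rel_rank M K Z0" using rel_basis_card[OF K fin(2) _ Y0] disj(2) by blast
  moreover have "finite Y" "finite Y0" using Y_sub(1) Y0_sub(1) fin by (meson finite_subset)+
  moreover have "Y \<inter> Y0 = {}" using Y_sub(1) Y0_sub(1) disj(1) by blast
  ultimately show ?thesis using card_Un_disjoint[of Y Y0] by simp
qed

lemma rel_rank_le_if_disjoint_base:
  assumes K: "basis M (carrier M - F) K" and F: "finite F" and B: "base M B" "X \<inter> B = {}"
  shows "rel_rank M K F \<le> rel_rank M K (F - X)"
proof -
  have K_sub: "K \<subseteq> carrier M - F" using basis_subset[OF K] .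
  have "K \<union> (B \<inter> F) \<subseteq> carrier M" using K_sub base_subset_carrier[OF B(1)] by blast
  then obtain J where J: "K \<subseteq> J" "basis M (K \<union> (B \<inter> F)) J"
    using basis_extend[OF basis_indep[OF K] Un_upper1] by blast
  have J_base: "base M J" using base_extending_complement_basis[OF K B(1) J] .
  have J_sub: "J - K \<subseteq> F - X" using basis_subset[OF J(2)] B(2) by blast
  have J_eq: "(J - K) \<union> K = J" using J(1) by blast
  have "rel_basis M K F (J - K)"
    unfolding rel_basis_def J_eq
    using J_sub base_indep[OF J_base] base_maximal[OF J_base] K_sub by blast
  then have "card (J - K) = rel_rank M K F"
    using rel_basis_card[OF basis_indep[OF K] F] K_sub by blast
  moreover have "card (J - K) \<le> rel_rank M K (F - X)"
    using rel_rank_ge[OF basis_indep[OF K] _ J_sub] F base_indep[OF J_base] J_eq by simp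
  ultimately show ?thesis by simp
qed

end

section \<open>Waves and finite traces\<close>

lemma wave_if_basis_extends:
  assumes N: "matroid N" and E: "carrier N = carrier M" and X: "X \<subseteq> carrier M"
    and K: "basis N (carrier N - X) K" and A: "basis M X A" "indep N (A \<union> K)"
  shows "wave M N X"
proof -
  obtain B where "base N B" "A \<union> K \<subseteq> B"
    using matroid.indep_extend_to_base[OF N A(2)] by blast
  then have "indep (contract_to N X) A"
    using matroid.indep_contract_to[OF N _ _ _ K] basis_def A(1) X E by (metis le_sup_iff)
  then show ?thesis unfolding wave_def base_restrict_iff_basis using A(1) X by blast
qed

text \<open>By minimality of \<open>X\<close>, the min-max value for \<open>M | X\<close> and \<open>N\<close> contracted onto \<open>X\<close> is
  \<open>rel_rank M {} X\<close>, so a maximum common independent set is an \<open>M\<close>-basis of \<open>X\<close>.\<close>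
lemma wave_if_minimizer:
  assumes M: "matroid M" and N: "matroid N" and E: "carrier N = carrier M"
    and F: "finite F" "F \<subseteq> carrier M" and K: "basis N (carrier N - F) K" and X: "X \<subseteq> F"
    and min: "\<And>Y. Y \<subseteq> F \<Longrightarrow>
      rel_rank M {} X + rel_rank N K (F - X) \<le> rel_rank M {} Y + rel_rank N K (F - Y)"
  shows "wave M N X"
proof -
  have K_indep: "indep N K" using matroid.basis_indep[OF N K] .
  have K_sub: "K \<subseteq> carrier N - F" using matroid.basis_subset[OF N K] .
  have fin: "finite X" "finite (F - X)" using F(1) X by (auto intro: finite_subset)
  obtain Y0 where Y0: "rel_basis N K (F - X) Y0"
    using matroid.rel_basis_exists[OF N K_indep fin(2)] by blast
  define K2 where "K2 = Y0 \<union> K"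
  have "carrier N - F \<union> (F - X) = carrier N - X" using X F(2) E by blast
  then have K2: "basis N (carrier N - X) K2"
    using matroid.basis_union_rel_basis[OF N K _ Y0] unfolding K2_def by fastforce
  have K2_indep: "indep N K2" using matroid.basis_indep[OF N K2] .
  have X_sub: "X \<subseteq> carrier M" using X F(2) by blast
  have X_K2: "X \<inter> K2 = {}" using matroid.basis_subset[OF N K2] by blast
  have r1: "rank_function X (rel_rank M {})"
    using matroid.rank_function_rel_rank[OF M matroid.indep_empty[OF M] fin(1)] by simp
  have r3: "rank_function X (rel_rank N K2)"
    using matroid.rank_function_rel_rank[OF N K2_indep fin(1) X_K2] .
  obtain A Y where cert: "minmax_certificate X (rel_rank M {}) (rel_rank N K2) A Y"
    using rank_function_minmax[OF fin(1) r1 r3] by blast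
  then have A: "A \<subseteq> X" "finite A" and Y: "Y \<subseteq> X" unfolding minmax_certificate_def
    using fin(1) by (auto intro: finite_subset)
  have "finite (X - Y)" "(X - Y) \<inter> (F - X) = {}" "((X - Y) \<union> (F - X)) \<inter> K = {}"
    using fin(1) K_sub X by auto
  from matroid.rel_rank_contract_additive[OF N K_indep this(1) fin(2) this(2,3) Y0]
  have "rel_rank N K2 (X - Y) + rel_rank N K (F - X) = rel_rank N K ((X - Y) \<union> (F - X))"
    unfolding K2_def .
  also have "(X - Y) \<union> (F - X) = F - Y" using X Y by blast
  finally have "rel_rank N K2 (X - Y) + rel_rank N K (F - X) = rel_rank N K (F - Y)" .
  moreover have "rel_rank M {} X + rel_rank N K (F - X) \<le> rel_rank M {} Y + rel_rank N K (F - Y)"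
    using min X Y by blast
  moreover have "rel_rank M {} Y + rel_rank N K2 (X - Y) \<le> card A"
    using cert unfolding minmax_certificate_def by blast
  ultimately have "rel_rank M {} X \<le> card A" by linarith
  moreover have "indep M A" "indep N (A \<union> K2)"
    using matroid.indep_if_rel_rank_eq_card[OF M matroid.indep_empty[OF M] A(2)]
      matroid.indep_if_rel_rank_eq_card[OF N K2_indep A(2)] cert
    unfolding minmax_certificate_def by auto
  ultimately have "basis M X A"
    using matroid.rel_basis_if_rel_rank_le_card[OF M matroid.indep_empty[OF M] fin(1) A(1)]
      matroid.basis_iff_rel_basis_empty[OF M] by simp
  moreover note \<open>indep N (A \<union> K2)\<close>
  ultimately show ?thesis by (rule wave_if_basis_extends[OF N E X_sub K2])
qed

lemma base_union_if_rel_rank_le_card: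
  assumes N: "matroid N" and K: "basis N (carrier N - F) K" and F: "finite F" "F \<subseteq> carrier M"
    and E: "carrier N = carrier M" and I: "I \<subseteq> F" "indep N (I \<union> K)"
    and le: "rel_rank N K F \<le> card I"
  shows "base N (I \<union> K)"
proof -
  have "rel_basis N K F I"
    using matroid.rel_basis_if_rel_rank_le_card[OF N matroid.basis_indep[OF N K] F(1) I le] .
  moreover have "(carrier N - F) \<union> F = carrier N" using F(2) E by blast
  ultimately show ?thesis
    using matroid.basis_union_rel_basis[OF N K subset_refl] unfolding base_def by metis
qed

lemma base_with_indep_trace:
  assumes M: "matroid M" and N: "matroid N" and E: "carrier N = carrier M"
    and B0: "base N B0" and avoid: "\<And>W. wave M N W \<Longrightarrow> W \<inter> B0 = {}"
    and F: "finite F" "F \<subseteq> carrier M"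
  shows "\<exists>B. base N B \<and> indep M (B \<inter> F)"
proof -
  obtain K where K: "basis N (carrier N - F) K" using matroid.basis_exists[OF N] by blast
  have K_indep: "indep N K" using matroid.basis_indep[OF N K] .
  have F_K: "F \<inter> K = {}" using matroid.basis_subset[OF N K] by blast
  define r1 where "r1 = rel_rank M {}"
  define r2 where "r2 = rel_rank N K"
  have "rank_function F r1" "rank_function F r2" unfolding r1_def r2_def
    using matroid.rank_function_rel_rank[OF M matroid.indep_empty[OF M] F(1)]
      matroid.rank_function_rel_rank[OF N K_indep F(1) F_K] by simp_all
  then obtain I X0 where cert: "minmax_certificate F r1 r2 I X0"
    using rank_function_minmax[OF F(1)] by blast
  then have I: "I \<subseteq> F" "finite I" using F(1) unfolding minmax_certificate_def
    by (auto intro: finite_subset)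
  have "indep M I" "indep N (I \<union> K)"
    using matroid.indep_if_rel_rank_eq_card[OF M matroid.indep_empty[OF M] I(2)]
      matroid.indep_if_rel_rank_eq_card[OF N K_indep I(2)] cert
    unfolding minmax_certificate_def r1_def r2_def by auto
  show ?thesis
  proof (cases "r2 F \<le> card I")
    case True
    have "base N (I \<union> K)"
      using base_union_if_rel_rank_le_card[OF N K F E I(1) \<open>indep N (I \<union> K)\<close>] True
      unfolding r2_def by blast
    moreover have "(I \<union> K) \<inter> F = I" using I(1) F_K by blast
    ultimately show ?thesis using \<open>indep M I\<close> by metis
  next
    case False
    define m where "m = (\<lambda>Y. r1 Y + r2 (F - Y))"
    have "X0 \<subseteq> F" using cert unfolding minmax_certificate_def by blast
    then obtain X where X: "X \<subseteq> F" and least: "\<And>Y. Y \<subseteq> F \<Longrightarrow> m X \<le> m Y"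
      using ex_has_least_nat[of "\<lambda>Y. Y \<subseteq> F" X0 m] by blast
    have "wave M N X"
      using wave_if_minimizer[OF M N E F K X] least unfolding m_def r1_def r2_def by blast
    then have "r2 F \<le> r2 (F - X)"
      using matroid.rel_rank_le_if_disjoint_base[OF N K F(1) B0] avoid unfolding r2_def by blast
    also have "\<dots> \<le> m X" unfolding m_def by simp
    also have "\<dots> \<le> m X0" using least \<open>X0 \<subseteq> F\<close> by blast
    also have "\<dots> \<le> card I" using cert unfolding minmax_certificate_def m_def by blast
    finally show ?thesis using False by simp
  qed
qed

section \<open>Compactness\<close>

text \<open>\<open>L\<close> is a partial assignment of membership values \<open>(x, x \<in> B)\<close>.\<close>
definition agrees :: "('a \<times> bool) set \<Rightarrow> 'a set \<Rightarrow> 'a set \<Rightarrow> bool" where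
  "agrees L F B \<longleftrightarrow> (\<forall>x b. (x, b) \<in> L \<longrightarrow> x \<in> F \<longrightarrow> (x \<in> B \<longleftrightarrow> b))"

definition consistent_assignment :: "('a set \<Rightarrow> 'a set \<Rightarrow> bool) \<Rightarrow> ('a \<times> bool) set \<Rightarrow> bool" where
  "consistent_assignment P L \<longleftrightarrow> (\<forall>F. finite F \<longrightarrow> (\<exists>B. P F B \<and> agrees L F B))"

lemma agrees_insert:
  "agrees (insert (x, b) L) F B \<longleftrightarrow> (x \<in> F \<longrightarrow> (x \<in> B \<longleftrightarrow> b)) \<and> agrees L F B"
  unfolding agrees_def by blast

lemma agrees_subset: "agrees L G B \<Longrightarrow> F \<subseteq> G \<Longrightarrow> agrees L F B"
  unfolding agrees_def by blast

lemma consistent_assignment_Union_chain: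
  assumes ex: "\<And>F. finite F \<Longrightarrow> \<exists>B. P F B"
    and C: "subset.chain {L. consistent_assignment P L} C"
  shows "consistent_assignment P (\<Union>C)"
  unfolding consistent_assignment_def
proof (intro allI impI)
  fix F :: "'a set" assume F: "finite F"
  show "\<exists>B. P F B \<and> agrees (\<Union>C) F B"
  proof (cases "C = {}")
    case True
    then show ?thesis using ex[OF F] unfolding agrees_def by simp
  next
    case False
    have "{l \<in> \<Union>C. fst l \<in> F} \<subseteq> F \<times> UNIV" by auto
    then have "finite {l \<in> \<Union>C. fst l \<in> F}" by (rule finite_subset) (use F in simp)
    then obtain L where L: "L \<in> C" "{l \<in> \<Union>C. fst l \<in> F} \<subseteq> L"
      using finite_subset_Union_chain[OF _ _ False C] by blast
    then have "consistent_assignment P L" using C unfolding subset_chain_def by blast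
    then obtain B where "P F B" "agrees L F B"
      using F unfolding consistent_assignment_def by blast
    moreover have "agrees (\<Union>C) F B = agrees L F B" using L unfolding agrees_def by auto
    ultimately show ?thesis by blast
  qed
qed

lemma maximal_consistent_assignment_total:
  assumes mono: "\<And>F G B. P G B \<Longrightarrow> F \<subseteq> G \<Longrightarrow> P F B"
    and L: "consistent_assignment P L"
    and max: "\<And>L'. consistent_assignment P L' \<Longrightarrow> L \<subseteq> L' \<Longrightarrow> L' = L"
  shows "(x, True) \<in> L \<or> (x, False) \<in> L"
proof (rule ccontr)
  assume x: "\<not> ?thesis"
  have "\<not> consistent_assignment P (insert (x, True) L)"
    "\<not> consistent_assignment P (insert (x, False) L)"
    using max[of "insert (x, True) L"] max[of "insert (x, False) L"] x by auto
  then obtain F1 F2 where F: "finite F1" "finite F2"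
    and no1: "\<And>B. P F1 B \<Longrightarrow> \<not> agrees (insert (x, True) L) F1 B"
    and no2: "\<And>B. P F2 B \<Longrightarrow> \<not> agrees (insert (x, False) L) F2 B"
    unfolding consistent_assignment_def by blast
  have "finite (insert x (F1 \<union> F2))" using F by simp
  then obtain B where B: "P (insert x (F1 \<union> F2)) B" "agrees L (insert x (F1 \<union> F2)) B"
    using L unfolding consistent_assignment_def by blast
  have "P F1 B" "P F2 B" "agrees L F1 B" "agrees L F2 B"
    using mono[OF B(1)] agrees_subset[OF B(2)] by blast+
  then show False using no1 no2 agrees_insert by metis
qed

lemma finite_witnesses_compactness:
  assumes ex: "\<And>F. finite F \<Longrightarrow> \<exists>B. P F B" and mono: "\<And>F G B. P G B \<Longrightarrow> F \<subseteq> G \<Longrightarrow> P F B"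
  shows "\<exists>A. \<forall>F. finite F \<longrightarrow> (\<exists>B. P F B \<and> B \<inter> F = A \<inter> F)"
proof -
  have "\<Union>C \<in> {L. consistent_assignment P L}" if "C \<in> chains {L. consistent_assignment P L}" for C
    using that consistent_assignment_Union_chain[OF ex] unfolding chains_alt_def by simp
  then have "\<exists>L\<in>{L. consistent_assignment P L}. \<forall>L'\<in>{L. consistent_assignment P L}. L \<subseteq> L' \<longrightarrow> L' = L"
    by (intro Zorn_Lemma) blast
  then obtain L where L: "consistent_assignment P L"
    and max: "\<And>L'. consistent_assignment P L' \<Longrightarrow> L \<subseteq> L' \<Longrightarrow> L' = L"
    by blast
  have total: "(x, True) \<in> L \<or> (x, False) \<in> L" for x
    using maximal_consistent_assignment_total[of P L x] mono L max by blast
  have "\<exists>B. P F B \<and> B \<inter> F = {x. (x, True) \<in> L} \<inter> F" if F: "finite F" for F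
  proof -
    obtain B where "P F B" "agrees L F B"
      using L F unfolding consistent_assignment_def by blast
    moreover from this have "B \<inter> F = {x. (x, True) \<in> L} \<inter> F"
      using total unfolding agrees_def by blast
    ultimately show ?thesis by blast
  qed
  then show ?thesis by blast
qed

lemma cond_plus_disjoint_base:
  assumes N: "matroid N" and cond: "cond_plus M N"
  obtains B0 where "base N B0" "\<And>W. wave M N W \<Longrightarrow> W \<inter> B0 = {}"
proof -
  obtain B0 where "base N B0" "wave_union M N \<inter> B0 = {}"
    using matroid.disjoint_base_if_contract_to_base_empty[OF N] cond
    unfolding cond_plus_def by blast
  then show ?thesis using that unfolding wave_union_def by blast
qed

lemma base_indep_if_finite_traces:
  assumes M: "matroid M" and N: "matroid N" and E: "carrier N = carrier M"
    and "finitary M" and "cofinitary N"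
    and traces: "\<And>F. finite F \<Longrightarrow> F \<subseteq> carrier M \<Longrightarrow> \<exists>B. base N B \<and> indep M (B \<inter> F)"
  shows "\<exists>B. base N B \<and> indep M B"
proof -
  define P where "P = (\<lambda>F B. base N B \<and> indep M (B \<inter> F))"
  have "\<exists>B. P F B" if F: "finite F" for F
  proof -
    obtain B where B: "base N B" "indep M (B \<inter> (F \<inter> carrier M))"
      using traces[of "F \<inter> carrier M"] F by blast
    moreover have "B \<inter> (F \<inter> carrier M) = B \<inter> F"
      using matroid.base_subset_carrier[OF N B(1)] E by blast
    ultimately show ?thesis unfolding P_def by auto
  qed
  moreover have "P F B" if "P G B" "F \<subseteq> G" for F G B
    using that matroid.indep_subset[OF M, of "B \<inter> G" "B \<inter> F"] unfolding P_def by blast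
  ultimately obtain A where A: "\<And>F. finite F \<Longrightarrow> \<exists>B. P F B \<and> B \<inter> F = A \<inter> F"
    using finite_witnesses_compactness[of P] by blast
  have "indep M (A \<inter> carrier M)"
  proof (rule matroid.finitary_indepI[OF M \<open>finitary M\<close>])
    fix G assume "finite G" "G \<subseteq> A \<inter> carrier M"
    then show "indep M G" using A[of G] unfolding P_def by (metis inf.absorb2 le_infE)
  qed simp
  moreover obtain B where "base N B" "(carrier N - A) \<inter> B = {}"
  proof -
    have "\<exists>B. base N B \<and> G \<inter> B = {}" if "finite G" "G \<subseteq> carrier N - A" for G
      using A[OF that(1)] that(2) unfolding P_def by blast
    then show ?thesis
      using matroid.cofinitary_coindepI[OF N \<open>cofinitary N\<close>, of "carrier N - A"] that by blast
  qed
  moreover have "B \<subseteq> A \<inter> carrier M"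
    using calculation(2,3) matroid.base_subset_carrier[OF N] E by blast
  ultimately show ?thesis using matroid.indep_subset[OF M] by blast
qed

theorem mainTheorem6:
  fixes M N :: "'a matroid"
  assumes "is_matroid M" and "is_matroid N"
    and "carrier N = carrier M"
    and "finitary M" and "cofinitary N"
    and "cond_plus M N"
  shows "\<exists>B. base N B \<and> indep M B"
proof -
  have M: "matroid M" and N: "matroid N" by (rule matroid.intro, fact)+
  obtain B0 where "base N B0" "\<And>W. wave M N W \<Longrightarrow> W \<inter> B0 = {}"
    using cond_plus_disjoint_base[OF N \<open>cond_plus M N\<close>] by blast
  then have "\<exists>B. base N B \<and> indep M (B \<inter> F)" if "finite F" "F \<subseteq> carrier M" for F
    using base_with_indep_trace[OF M N \<open>carrier N = carrier M\<close>] that by blast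
  then show ?thesis using base_indep_if_finite_traces[OF M N assms(3-5)] by blast
qed

end
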